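(* Let $G$ be a graph and $c:V(G)\to\{0,1\}$ a coloring that is strongly maximal in some set $A'\subseteq V(G)$. If $A\supseteq A'$ is a set of vertices such that $A\setminus A'$ contains only finitely many vertices of finite degree, then $c$ is almost strongly maximal in $A$.
   Context: Graphs are simple, undirected, possibly infinite; degree of $v$ is $|N(v)|$. A coloring is a map $c:V(G)\to\{0,1\}$. $\mathit{trans}(c)=\{uv\in E(G):c(u)\neq c(v)\}$; $c*F$ is the coloring differing from $c$ exactly on $F$; for finite $F$ consisting of vertices of finite degree, $\mathit{dtrans}(c,F)=|\mathit{trans}(c)\setminus\mathit{trans}(c*F)|-|\mathit{trans}(c*F)\setminus\mathit{trans}(c)|$. $c$ is strongly maximal in $A$ if $\mathit{dtrans}(c,F)\ge0$ for every finite $F\subseteq A$ consisting of vertices of finite degree. Colorings $c,c'$ are close in $A$ if $c\triangle c'=\{v:c(v)\neq c'(v)\}$ is finite, consists only of vertices of finite degree, and is contained in $A$. $c$ is almost strongly maximal in $A$ if it is close in $A$ to a coloring that is strongly maximal in $A$. *)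

theory Defs
  imports Main
begin

definition graph :: "'a set \<Rightarrow> ('a \<Rightarrow> 'a \<Rightarrow> bool) \<Rightarrow> bool" where
  "graph V E \<longleftrightarrow> (\<forall>u v. E u v \<longrightarrow> u \<in> V \<and> v \<in> V \<and> E v u \<and> u \<noteq> v)"

definition nbrs :: "'a set \<Rightarrow> ('a \<Rightarrow> 'a \<Rightarrow> bool) \<Rightarrow> 'a \<Rightarrow> 'a set" where
  "nbrs V E v = {u \<in> V. E v u}"

definition fin_deg :: "'a set \<Rightarrow> ('a \<Rightarrow> 'a \<Rightarrow> bool) \<Rightarrow> 'a \<Rightarrow> bool" where
  "fin_deg V E v \<longleftrightarrow> finite (nbrs V E v)"

definition edges :: "'a set \<Rightarrow> ('a \<Rightarrow> 'a \<Rightarrow> bool) \<Rightarrow> 'a set set" where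
  "edges V E = {{u, v} | u v. u \<in> V \<and> v \<in> V \<and> E u v}"

text \<open>Colorings V(G) -> {0,1} are modelled as boolean-valued maps; only values on V matter.\<close>
definition trans_edges :: "'a set \<Rightarrow> ('a \<Rightarrow> 'a \<Rightarrow> bool) \<Rightarrow> ('a \<Rightarrow> bool) \<Rightarrow> 'a set set" where
  "trans_edges V E c = {{u, v} | u v. u \<in> V \<and> v \<in> V \<and> E u v \<and> c u \<noteq> c v}"

definition flip :: "('a \<Rightarrow> bool) \<Rightarrow> 'a set \<Rightarrow> ('a \<Rightarrow> bool)" where
  "flip c F = (\<lambda>v. if v \<in> F then \<not> c v else c v)"

definition dtrans :: "'a set \<Rightarrow> ('a \<Rightarrow> 'a \<Rightarrow> bool) \<Rightarrow> ('a \<Rightarrow> bool) \<Rightarrow> 'a set \<Rightarrow> int" where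
  "dtrans V E c F =
     int (card (trans_edges V E c - trans_edges V E (flip c F)))
   - int (card (trans_edges V E (flip c F) - trans_edges V E c))"

definition strongly_maximal :: "'a set \<Rightarrow> ('a \<Rightarrow> 'a \<Rightarrow> bool) \<Rightarrow> ('a \<Rightarrow> bool) \<Rightarrow> 'a set \<Rightarrow> bool" where
  "strongly_maximal V E c A \<longleftrightarrow>
     (\<forall>F. finite F \<and> F \<subseteq> A \<and> (\<forall>v\<in>F. fin_deg V E v) \<longrightarrow> dtrans V E c F \<ge> 0)"

definition close :: "'a set \<Rightarrow> ('a \<Rightarrow> 'a \<Rightarrow> bool) \<Rightarrow> ('a \<Rightarrow> bool) \<Rightarrow> ('a \<Rightarrow> bool) \<Rightarrow> 'a set \<Rightarrow> bool" where
  "close V E c c' A \<longleftrightarrow>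
     (let D = {v \<in> V. c v \<noteq> c' v} in finite D \<and> (\<forall>v\<in>D. fin_deg V E v) \<and> D \<subseteq> A)"

definition almost_strongly_maximal :: "'a set \<Rightarrow> ('a \<Rightarrow> 'a \<Rightarrow> bool) \<Rightarrow> ('a \<Rightarrow> bool) \<Rightarrow> 'a set \<Rightarrow> bool" where
  "almost_strongly_maximal V E c A \<longleftrightarrow>
     (\<exists>c'. close V E c c' A \<and> strongly_maximal V E c' A)"

end

theory Submission
  imports Defs
begin

text \<open>Flipping a finite set F of finite-degree vertices only changes edges incident to F, so
  dtrans is a cocycle: flipping G and then H changes the transitions exactly as flipping the
  symmetric difference of G and H does. Flipping any subset of the finite set B of finite-degree
  vertices of A - A' costs at most the number of edges incident to B. Hence for F \<subseteq> A, splitting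
  F into F \<inter> A' and F - A' shows that dtrans c F is bounded below uniformly. A set F0 minimising
  dtrans c F then yields the coloring obtained from c by flipping F0, which is close to c in A and,
  by the cocycle identity, strongly maximal in A.\<close>

definition admissible :: "'a set \<Rightarrow> ('a \<Rightarrow> 'a \<Rightarrow> bool) \<Rightarrow> 'a set \<Rightarrow> 'a set \<Rightarrow> bool" where
  "admissible V E A F \<longleftrightarrow> finite F \<and> F \<subseteq> A \<and> (\<forall>v\<in>F. fin_deg V E v)"

definition incident_edges :: "('a \<Rightarrow> 'a \<Rightarrow> bool) \<Rightarrow> 'a set \<Rightarrow> 'a set set" where
  "incident_edges E F = {{u, v} | u v. E u v \<and> (u \<in> F \<or> v \<in> F)}"

lemma strongly_maximal_iff_admissible:
  "strongly_maximal V E c A \<longleftrightarrow> (\<forall>F. admissible V E A F \<longrightarrow> dtrans V E c F \<ge> 0)"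
  unfolding strongly_maximal_def admissible_def by blast

lemma admissible_sym_diff:
  "admissible V E A G \<Longrightarrow> admissible V E A H \<Longrightarrow> admissible V E A (sym_diff G H)"
  unfolding admissible_def by auto

lemma incident_edges_mono: "F \<subseteq> G \<Longrightarrow> incident_edges E F \<subseteq> incident_edges E G"
  unfolding incident_edges_def by blast

lemma finite_incident_edges:
  assumes "graph V E" and "finite F" and "\<forall>v\<in>F. fin_deg V E v"
  shows "finite (incident_edges E F)"
proof -
  have "incident_edges E F \<subseteq> (\<Union>u\<in>F. (\<lambda>v. {u, v}) ` nbrs V E u)"
  proof
    fix x assume "x \<in> incident_edges E F"
    then obtain u v where x: "x = {u, v}" "E u v" "u \<in> F \<or> v \<in> F"
      unfolding incident_edges_def by blast
    with \<open>graph V E\<close> have "u \<in> V" "v \<in> V" "E v u" unfolding graph_def by auto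
    with x show "x \<in> (\<Union>u\<in>F. (\<lambda>v. {u, v}) ` nbrs V E u)"
      unfolding nbrs_def by (auto simp: insert_commute)
  qed
  moreover have "finite (\<Union>u\<in>F. (\<lambda>v. {u, v}) ` nbrs V E u)"
    using assms(2,3) unfolding fin_deg_def by auto
  ultimately show ?thesis by (rule finite_subset)
qed

lemma trans_edges_diff_flip_subset:
  "trans_edges V E c - trans_edges V E (flip c F) \<subseteq> incident_edges E F"
  "trans_edges V E (flip c F) - trans_edges V E c \<subseteq> incident_edges E F"
  unfolding trans_edges_def incident_edges_def flip_def by auto

lemma card_diff_diff_eq_card_Int:
  assumes "finite D" and "X - Y \<subseteq> D" and "Y - X \<subseteq> D"
  shows "int (card (X - Y)) - int (card (Y - X)) = int (card (X \<inter> D)) - int (card (Y \<inter> D))"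
proof -
  have fin: "finite (X - Y)" "finite (Y - X)" "finite (X \<inter> Y \<inter> D)"
    using assms finite_subset by auto
  have "X \<inter> D = (X - Y) \<union> (X \<inter> Y \<inter> D)" and "Y \<inter> D = (Y - X) \<union> (X \<inter> Y \<inter> D)"
    using assms by blast+
  then have "card (X \<inter> D) = card (X - Y) + card (X \<inter> Y \<inter> D)"
    and "card (Y \<inter> D) = card (Y - X) + card (X \<inter> Y \<inter> D)"
    using fin by (metis card_Un_disjoint Diff_disjoint Int_Diff_disjoint inf_commute inf_left_commute)+
  then show ?thesis by simp
qed

lemma dtrans_eq_card_Int:
  assumes "finite D" and "incident_edges E F \<subseteq> D"
  shows "dtrans V E c F
    = int (card (trans_edges V E c \<inter> D)) - int (card (trans_edges V E (flip c F) \<inter> D))"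
  unfolding dtrans_def
  using assms trans_edges_diff_flip_subset[of V E c F]
  by (intro card_diff_diff_eq_card_Int) auto

lemma flip_flip: "flip (flip c G) H = flip c (sym_diff G H)"
  unfolding flip_def by auto

lemma dtrans_cocycle:
  assumes "graph V E"
    and "finite G" "\<forall>v\<in>G. fin_deg V E v" and "finite H" "\<forall>v\<in>H. fin_deg V E v"
  shows "dtrans V E c G + dtrans V E (flip c G) H = dtrans V E c (sym_diff G H)"
proof -
  define D where "D = incident_edges E G \<union> incident_edges E H"
  have "finite D" unfolding D_def using finite_incident_edges assms by blast
  have "incident_edges E (sym_diff G H) \<subseteq> D"
    unfolding D_def incident_edges_def by blast
  then show ?thesis
    using dtrans_eq_card_Int[OF \<open>finite D\<close>, of E G V c]
      dtrans_eq_card_Int[OF \<open>finite D\<close>, of E H V "flip c G"]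
      dtrans_eq_card_Int[OF \<open>finite D\<close>, of E "sym_diff G H" V c]
    unfolding D_def flip_flip by auto
qed

lemma dtrans_ge_neg_card_incident_edges:
  assumes "graph V E" and "finite B" "\<forall>v\<in>B. fin_deg V E v" and "H \<subseteq> B"
  shows "dtrans V E c H \<ge> - int (card (incident_edges E B))"
proof -
  have "trans_edges V E (flip c H) - trans_edges V E c \<subseteq> incident_edges E B"
    using trans_edges_diff_flip_subset(2) incident_edges_mono[OF \<open>H \<subseteq> B\<close>] by blast
  then have "card (trans_edges V E (flip c H) - trans_edges V E c) \<le> card (incident_edges E B)"
    using card_mono finite_incident_edges[OF assms(1-3)] by blast
  then show ?thesis unfolding dtrans_def by simp
qed

lemma close_flip:
  assumes "admissible V E A F"
  shows "close V E c (flip c F) A"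
proof -
  have "{v \<in> V. c v \<noteq> flip c F v} \<subseteq> F" unfolding flip_def by auto
  with assms show ?thesis
    unfolding close_def admissible_def Let_def using finite_subset by blast
qed

lemma strongly_maximal_flip_minimiser:
  assumes "graph V E" and "admissible V E A F0"
    and min: "\<And>F. admissible V E A F \<Longrightarrow> dtrans V E c F0 \<le> dtrans V E c F"
  shows "strongly_maximal V E (flip c F0) A"
  unfolding strongly_maximal_iff_admissible
proof (intro allI impI)
  fix F assume "admissible V E A F"
  with \<open>admissible V E A F0\<close> have "dtrans V E c F0 \<le> dtrans V E c (sym_diff F0 F)"
    by (intro min admissible_sym_diff)
  moreover have "dtrans V E c F0 + dtrans V E (flip c F0) F = dtrans V E c (sym_diff F0 F)"
    using dtrans_cocycle[OF \<open>graph V E\<close>] \<open>admissible V E A F\<close> \<open>admissible V E A F0\<close>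
    unfolding admissible_def by blast
  ultimately show "dtrans V E (flip c F0) F \<ge> 0" by linarith
qed

lemma almost_strongly_maximal_if_dtrans_bounded_below:
  assumes "graph V E" and bound: "\<And>F. admissible V E A F \<Longrightarrow> dtrans V E c F \<ge> - K"
  shows "almost_strongly_maximal V E c A"
proof -
  have "admissible V E A {}" unfolding admissible_def by simp
  then obtain F0 where "admissible V E A F0"
    and least: "\<And>F. admissible V E A F \<Longrightarrow> nat (dtrans V E c F0 + K) \<le> nat (dtrans V E c F + K)"
    using ex_has_least_nat[of "admissible V E A" "{}" "\<lambda>F. nat (dtrans V E c F + K)"] by blast
  have "dtrans V E c F0 \<le> dtrans V E c F" if "admissible V E A F" for F
    using least[OF that] bound[OF that] bound[OF \<open>admissible V E A F0\<close>] by linarith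
  with assms(1) \<open>admissible V E A F0\<close> show ?thesis
    unfolding almost_strongly_maximal_def
    using close_flip strongly_maximal_flip_minimiser by blast
qed

lemma dtrans_bounded_below_extension:
  assumes "graph V E" and "strongly_maximal V E c A'"
    and B: "finite B" "\<forall>v\<in>B. fin_deg V E v" "{v \<in> A - A'. fin_deg V E v} \<subseteq> B"
    and "admissible V E A F"
  shows "dtrans V E c F \<ge> - int (card (incident_edges E B))"
proof -
  have F: "finite F" "F \<subseteq> A" "\<forall>v\<in>F. fin_deg V E v"
    using \<open>admissible V E A F\<close> unfolding admissible_def by auto
  have "F - A' \<subseteq> B" using F B(3) by auto
  have "sym_diff (F \<inter> A') (F - A') = F" by blast
  have "dtrans V E c (F \<inter> A') \<ge> 0"
    using \<open>strongly_maximal V E c A'\<close> F unfolding strongly_maximal_def by auto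
  moreover have "dtrans V E (flip c (F \<inter> A')) (F - A') \<ge> - int (card (incident_edges E B))"
    using dtrans_ge_neg_card_incident_edges[OF \<open>graph V E\<close> B(1,2) \<open>F - A' \<subseteq> B\<close>] .
  moreover have "dtrans V E c (F \<inter> A') + dtrans V E (flip c (F \<inter> A')) (F - A') = dtrans V E c F"
    using dtrans_cocycle[OF \<open>graph V E\<close>, of "F \<inter> A'" "F - A'" c] F
      \<open>sym_diff (F \<inter> A') (F - A') = F\<close> by auto
  ultimately show ?thesis by linarith
qed

theorem corollary2p4:
  fixes V :: "'a set" and E :: "'a \<Rightarrow> 'a \<Rightarrow> bool" and c :: "'a \<Rightarrow> bool" and A A' :: "'a set"
  assumes "graph V E"
    and "A' \<subseteq> A" and "A \<subseteq> V"
    and "strongly_maximal V E c A'"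
    and "finite {v \<in> A - A'. fin_deg V E v}"
  shows "almost_strongly_maximal V E c A"
  by (rule almost_strongly_maximal_if_dtrans_bounded_below[OF assms(1)],
      rule dtrans_bounded_below_extension[OF assms(1,4,5)]) auto

end
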